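(* Every finitely generated countable profinite completely regular semigroup is finite.
   Context: A profinite semigroup is a compact (Hausdorff) topological semigroup that is residually finite, i.e. any two distinct elements are separated by a continuous homomorphism onto a finite discrete semigroup. It is finitely generated if some finite subset generates a dense subsemigroup. A semigroup is completely regular if each of its elements lies in a subgroup. *)

theory Defs
  imports "HOL-Analysis.Analysis"
begin

definition subsemigroup_generated :: "'a::semigroup_mult set \<Rightarrow> 'a set" where
  "subsemigroup_generated F =
     \<Inter> {S. F \<subseteq> S \<and> (\<forall>x\<in>S. \<forall>y\<in>S. x * y \<in> S)}"

definition is_subgroup :: "'a::semigroup_mult set \<Rightarrow> bool" where
  "is_subgroup H \<longleftrightarrow>
     (\<forall>x\<in>H. \<forall>y\<in>H. x * y \<in> H) \<and>
     (\<exists>e\<in>H. (\<forall>h\<in>H. e * h = h \<and> h * e = h) \<and>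
              (\<forall>h\<in>H. \<exists>g\<in>H. h * g = e \<and> g * h = e))"

definition completely_regular :: "'a::semigroup_mult itself \<Rightarrow> bool" where
  "completely_regular _ \<longleftrightarrow> (\<forall>x::'a. \<exists>H. x \<in> H \<and> is_subgroup H)"

text \<open>A finite (discrete) semigroup is represented, up to isomorphism, by a
  finite carrier T of natural numbers with an associative operation on T.\<close>
definition finite_semigroup :: "nat set \<Rightarrow> (nat \<Rightarrow> nat \<Rightarrow> nat) \<Rightarrow> bool" where
  "finite_semigroup T op \<longleftrightarrow> finite T \<and>
     (\<forall>a\<in>T. \<forall>b\<in>T. op a b \<in> T) \<and>
     (\<forall>a\<in>T. \<forall>b\<in>T. \<forall>c\<in>T. op (op a b) c = op a (op b c))"

text \<open>Continuous homomorphism from the topological semigroup 'a onto a finite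
  discrete semigroup (T, op): continuity into a discrete space means every
  fibre is open.\<close>
definition cont_hom_onto_finite ::
    "('a::{semigroup_mult,topological_space} \<Rightarrow> nat) \<Rightarrow> nat set \<Rightarrow> (nat \<Rightarrow> nat \<Rightarrow> nat) \<Rightarrow> bool" where
  "cont_hom_onto_finite f T op \<longleftrightarrow> finite_semigroup T op \<and>
     range f = T \<and> (\<forall>x y. f (x * y) = op (f x) (f y)) \<and>
     (\<forall>t. open (f -` {t}))"

definition profinite_semigroup :: "'a::{semigroup_mult,topological_space} itself \<Rightarrow> bool" where
  "profinite_semigroup _ \<longleftrightarrow>
     compact (UNIV :: 'a set) \<and>
     (\<forall>x y :: 'a. x \<noteq> y \<longrightarrow> (\<exists>U V. open U \<and> open V \<and> x \<in> U \<and> y \<in> V \<and> U \<inter> V = {})) \<and>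
     continuous_on UNIV (\<lambda>p :: 'a \<times> 'a. fst p * snd p) \<and>
     (\<forall>x y :: 'a. x \<noteq> y \<longrightarrow>
        (\<exists>f T op. cont_hom_onto_finite f T op \<and> f x \<noteq> f y))"

definition finitely_generated_top :: "'a::{semigroup_mult,topological_space} itself \<Rightarrow> bool" where
  "finitely_generated_top _ \<longleftrightarrow>
     (\<exists>F :: 'a set. finite F \<and> closure (subsemigroup_generated F) = UNIV)"

end

theory Submission
  imports Defs
begin

text \<open>The subsemigroup generated by a finite set C is finite, by induction on C. An element x
  of it that is not generated by a proper subset of C is a word containing every letter of C.
  Its shortest prefix p containing every letter is a letter or a product f c with f generated
  by a proper subset, so by the induction hypothesis p ranges over a finite set; symmetrically
  for the shortest such suffix q. As p contains all letters of C it lies J-below x, and in a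
  completely regular semigroup this together with x \<in> pS forces x R p; likewise x L q. So x
  lies in one of finitely many H-classes. In a compact Hausdorff semigroup an H-class is
  compact, and by Green's lemma a right translation moves any of its points onto any other and
  is inverted on the class by another right translation. If the class is countable, Baire's
  theorem gives one isolated point, hence all its points are isolated and it is finite.
  Finally, a finite dense subsemigroup is closed, hence the whole semigroup.\<close>

section \<open>Compact countable Hausdorff spaces\<close>

lemma closed_if_compact_Hausdorff:
  assumes "Hausdorff_space (euclidean :: 'a::topological_space topology)" and "compact (K :: 'a set)"
  shows "closed K"
  using compactin_imp_closedin[OF assms(1)] assms(2) by simp

lemma countable_compact_Hausdorff_has_isolated_point:
  assumes Hausdorff: "Hausdorff_space (euclidean :: 'a::topological_space topology)"
    and K: "compact (K :: 'a set)" "countable K" "K \<noteq> {}"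
  obtains s where "s isolated_in K"
proof -
  let ?X = "subtopology euclidean K"
  have "compact_space ?X" and "Hausdorff_space ?X"
    using K(1) Hausdorff by (simp_all add: compact_space_subtopology Hausdorff_space_subtopology)
  then have Baire: "locally_compact_space ?X \<and> regular_space ?X"
    by (simp add: compact_imp_locally_compact_space compact_Hausdorff_imp_regular_space)
  show thesis
  proof (rule ccontr)
    assume no_isolated: "\<not> thesis"
    have "?X interior_of \<Union>((\<lambda>k. {k}) ` K) = {}"
    proof (rule Baire_category_alt)
      fix T assume "T \<in> (\<lambda>k. {k}) ` K"
      then obtain k where k: "k \<in> K" "T = {k}" by auto
      have "\<not> openin ?X {k}"
        using no_isolated k(1) that by (auto simp: openin_subtopology isolated_in_def)
      moreover have "?X interior_of {k} \<subseteq> {k}"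
        by (rule interior_of_subset)
      ultimately have "?X interior_of {k} = {}"
        by (metis openin_interior_of subset_singletonD)
      then show "closedin ?X T \<and> ?X interior_of T = {}"
        using k \<open>Hausdorff_space ?X\<close> by (simp add: closedin_Hausdorff_singleton)
    qed (use Baire K(2) in auto)
    then show False
      using K(3) by (simp add: interior_of_openin openin_subtopology_refl)
  qed
qed

lemma compact_discrete_imp_finite:
  fixes K :: "'a::topological_space set"
  assumes "compact K" and "discrete K"
  shows "finite K"
  using assms Heine_Borel_imp_Bolzano_Weierstrass discrete_def isolated_in_islimpt_iff by blast

section \<open>Green's relations\<close>

text \<open>Defined without adjoining a unit; in a completely regular semigroup every element is a
  left and right multiple of itself, so these agree with the usual preorders.\<close>

definition R_le :: "'a::semigroup_mult \<Rightarrow> 'a \<Rightarrow> bool" where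
  "R_le x y \<longleftrightarrow> (\<exists>t. x = y * t)"

definition L_le :: "'a::semigroup_mult \<Rightarrow> 'a \<Rightarrow> bool" where
  "L_le x y \<longleftrightarrow> (\<exists>t. x = t * y)"

definition J_le :: "'a::semigroup_mult \<Rightarrow> 'a \<Rightarrow> bool" where
  "J_le x y \<longleftrightarrow> (\<exists>a b. x = a * y * b)"

definition R_class :: "'a::semigroup_mult \<Rightarrow> 'a set" where
  "R_class p = {x. R_le x p \<and> R_le p x}"

definition L_class :: "'a::semigroup_mult \<Rightarrow> 'a set" where
  "L_class q = {x. L_le x q \<and> L_le q x}"

lemma R_le_trans: "R_le x y \<Longrightarrow> R_le y z \<Longrightarrow> R_le x z"
  unfolding R_le_def by (auto simp: mult.assoc)

lemma L_le_trans: "L_le x y \<Longrightarrow> L_le y z \<Longrightarrow> L_le x z"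
  unfolding L_le_def by (auto simp flip: mult.assoc)

lemma J_le_trans: "J_le x y \<Longrightarrow> J_le y z \<Longrightarrow> J_le x z"
  unfolding J_le_def by (metis mult.assoc)

lemma L_le_mult_right: "L_le x y \<Longrightarrow> L_le (x * t) (y * t)"
  unfolding L_le_def by (auto simp: mult.assoc)

lemma H_class_right_translation:
  assumes y: "y \<in> R_class p \<inter> L_class q" and s: "s \<in> R_class p \<inter> L_class q"
  obtains t t' where "s = y * t" "y = s * t'"
    and "\<And>z. z \<in> R_class p \<inter> L_class q \<Longrightarrow> z * t \<in> R_class p \<inter> L_class q \<and> z * t * t' = z"
proof -
  have "R_le s y" "R_le y s"
    using R_le_trans[of s p y] R_le_trans[of y p s] y s by (auto simp: R_class_def)
  then obtain t t' where t: "s = y * t" and t': "y = s * t'"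
    by (auto simp: R_le_def)
  have "z * t \<in> R_class p \<inter> L_class q \<and> z * t * t' = z" if z: "z \<in> R_class p \<inter> L_class q" for z
  proof -
    have "L_le z y" "L_le y z"
      using L_le_trans[of z q y] L_le_trans[of y q z] y z by (auto simp: L_class_def)
    then obtain w where w: "z = w * y"
      by (auto simp: L_le_def)
    have "z * t * t' = w * ((y * t) * t')"
      by (simp add: w mult.assoc)
    also have "\<dots> = z"
      by (simp add: w flip: t t')
    finally have cancel: "z * t * t' = z" .
    then have "R_le (z * t) z" "R_le z (z * t)"
      unfolding R_le_def by metis+
    then have "z * t \<in> R_class p"
      using R_le_trans[of "z * t" z p] R_le_trans[of p z "z * t"] z by (auto simp: R_class_def)
    moreover have "L_le (z * t) s" "L_le s (z * t)"
      using L_le_mult_right[of z y t] L_le_mult_right[of y z t] \<open>L_le z y\<close> \<open>L_le y z\<close> t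
      by simp_all
    then have "z * t \<in> L_class q"
      using L_le_trans[of "z * t" s q] L_le_trans[of q s "z * t"] s by (auto simp: L_class_def)
    ultimately show ?thesis
      using cancel by blast
  qed
  then show thesis
    using that t t' by blast
qed

section \<open>H-classes of a compact semigroup\<close>

context
  assumes compact: "compact (UNIV :: 'a::{semigroup_mult,topological_space} set)"
    and Hausdorff: "Hausdorff_space (euclidean :: 'a topology)"
    and continuous_mult: "continuous_on UNIV (\<lambda>x :: 'a \<times> 'a. fst x * snd x)"
begin

lemma closed_R_le_L_le:
  fixes p :: 'a
  shows "closed {x. R_le x p}" "closed {x. R_le p x}" "closed {x. L_le x p}" "closed {x. L_le p x}"
proof -
  let ?mult = "\<lambda>x :: 'a \<times> 'a. fst x * snd x"
  have image_closed: "closed (f ` K)" if "compact K" "continuous_on K f" for f :: "'a \<times> 'a \<Rightarrow> 'a" and K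
    using closed_if_compact_Hausdorff[OF Hausdorff] compact_continuous_image that by blast
  have compact_factorisations: "compact (?mult -` {p})"
    using compact_Int_closed[OF compact_Times[OF compact compact]]
      continuous_on_closed_vimage[OF closed_UNIV, THEN iffD1, OF continuous_mult]
      closed_if_compact_Hausdorff[OF Hausdorff finite_imp_compact[of "{p}"]] by simp
  have "{x. R_le x p} = ?mult ` ({p} \<times> UNIV)" "{x. L_le x p} = ?mult ` (UNIV \<times> {p})"
    "{x. R_le p x} = fst ` (?mult -` {p})" "{x. L_le p x} = snd ` (?mult -` {p})"
    unfolding R_le_def L_le_def
    by (auto intro: image_eqI[where x = "(_, _)"])
  moreover have "compact ({p} \<times> (UNIV :: 'a set))" "compact ((UNIV :: 'a set) \<times> {p})"
    using compact by (simp_all add: compact_Times)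
  moreover have "continuous_on K fst" "continuous_on K snd" for K :: "('a \<times> 'a) set"
    using continuous_on_fst[OF continuous_on_id] continuous_on_snd[OF continuous_on_id] by auto
  ultimately show "closed {x. R_le x p}" "closed {x. R_le p x}" "closed {x. L_le x p}" "closed {x. L_le p x}"
    using image_closed compact_factorisations continuous_on_subset[OF continuous_mult] by auto
qed

lemma finite_H_class:
  fixes p q :: 'a
  assumes countable: "countable (UNIV :: 'a set)"
  shows "finite (R_class p \<inter> L_class q)"
proof -
  let ?H = "R_class p \<inter> L_class q"
  have "closed ?H"
    unfolding R_class_def L_class_def Collect_conj_eq
    by (intro closed_Int closed_R_le_L_le)
  then have "compact ?H"
    using compact_Int_closed[OF compact] by simp
  moreover have "discrete ?H"
  proof (cases "?H = {}")
    case False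
    moreover have "countable ?H"
      using countable_subset[OF subset_UNIV countable] .
    ultimately obtain s where "s isolated_in ?H"
      using countable_compact_Hausdorff_has_isolated_point[OF Hausdorff \<open>compact ?H\<close>] by blast
    then obtain U where s: "s \<in> ?H" and U: "open U" "U \<inter> ?H = {s}"
      by (auto simp: isolated_in_def)
    show ?thesis
    proof (rule discreteI)
      fix y assume y: "y \<in> ?H"
      obtain t t' where t: "s = y * t" "y = s * t'"
        and translate: "\<And>z. z \<in> ?H \<Longrightarrow> z * t \<in> ?H \<and> z * t * t' = z"
        using H_class_right_translation[OF y s] by blast
      have "continuous_on UNIV (\<lambda>z. z * t)"
        using continuous_on_compose2[OF continuous_mult, of UNIV "\<lambda>z. (z, t)"]
        by (simp add: continuous_on_Pair)
      then have "open ((\<lambda>z. z * t) -` U)"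
        using U(1) by (simp add: continuous_on_open_vimage)
      moreover have "(\<lambda>z. z * t) -` U \<inter> ?H = {y}"
      proof (intro equalityI subsetI)
        fix z assume z: "z \<in> (\<lambda>z. z * t) -` U \<inter> ?H"
        then have "z * t = s"
          using U(2) translate by blast
        then show "z \<in> {y}"
          using translate z t(2) by force
      qed (use U(2) s t(1) y in auto)
      ultimately show "y isolated_in ?H"
        using y by (auto simp: isolated_in_def)
    qed
  qed (simp add: discrete_def)
  ultimately show ?thesis
    by (rule compact_discrete_imp_finite)
qed

end

section \<open>Words over a generating set\<close>

lemma subsemigroup_generated_subset: "C \<subseteq> subsemigroup_generated C"
  unfolding subsemigroup_generated_def by blast

lemma subsemigroup_generated_mult:
  "x \<in> subsemigroup_generated C \<Longrightarrow> y \<in> subsemigroup_generated C \<Longrightarrow> x * y \<in> subsemigroup_generated C"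
  unfolding subsemigroup_generated_def by blast

lemma subsemigroup_generated_least:
  "C \<subseteq> S \<Longrightarrow> (\<And>x y. x \<in> S \<Longrightarrow> y \<in> S \<Longrightarrow> x * y \<in> S) \<Longrightarrow> subsemigroup_generated C \<subseteq> S"
  unfolding subsemigroup_generated_def by blast

text \<open>There is no unit, so only nonempty words have a meaningful product.\<close>

definition word_prod :: "'a::semigroup_mult list \<Rightarrow> 'a" where
  "word_prod w = foldl (*) (hd w) (tl w)"

lemma foldl_mult_assoc: "foldl (*) (a * b) w = (a :: 'a::semigroup_mult) * foldl (*) b w"
  by (induction w arbitrary: b) (simp_all add: mult.assoc)

lemma word_prod_singleton [simp]: "word_prod [a] = a"
  by (simp add: word_prod_def)

lemma word_prod_append:
  assumes "u \<noteq> []" and "v \<noteq> []"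
  shows "word_prod (u @ v) = word_prod u * word_prod v"
  using assms by (cases u; cases v) (simp_all add: word_prod_def foldl_mult_assoc)

lemma word_prod_snoc: "u \<noteq> [] \<Longrightarrow> word_prod (u @ [a]) = word_prod u * a"
  using word_prod_append[of u "[a]"] by simp

lemma word_prod_in_subsemigroup_generated:
  "w \<noteq> [] \<Longrightarrow> set w \<subseteq> C \<Longrightarrow> word_prod w \<in> subsemigroup_generated C"
proof (induction w rule: rev_induct)
  case (snoc a w)
  then show ?case
    using subsemigroup_generated_subset[of C] subsemigroup_generated_mult
    by (cases "w = []") (auto simp: word_prod_snoc)
qed simp

lemma subsemigroup_generatedE:
  assumes "x \<in> subsemigroup_generated C"
  obtains w where "w \<noteq> []" "set w \<subseteq> C" "x = word_prod w"
proof -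
  let ?W = "{word_prod w | w. w \<noteq> [] \<and> set w \<subseteq> C}"
  have "C \<subseteq> ?W"
    by (force intro: exI[of _ "[_]"])
  moreover have "x * y \<in> ?W" if "x \<in> ?W" "y \<in> ?W" for x y
    using that by (force simp flip: word_prod_append)
  ultimately have "x \<in> ?W"
    using subsemigroup_generated_least assms by blast
  then show thesis
    using that by blast
qed

lemma split_list_shortest_full_prefix:
  "w \<noteq> [] \<Longrightarrow> \<exists>u c v. w = u @ c # v \<and> set u \<subset> set w \<and> set (u @ [c]) = set w"
proof (induction w rule: rev_induct)
  case (snoc a w)
  show ?case
  proof (cases "set w = set (w @ [a])")
    case True
    with snoc obtain u c v where "w = u @ c # v" "set u \<subset> set w" "set (u @ [c]) = set w"
      by fastforce
    with True show ?thesis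
      by (metis append.assoc append_Cons)
  next
    case False
    then show ?thesis
      by auto
  qed
qed simp

lemma split_list_shortest_full_suffix:
  assumes "w \<noteq> []"
  shows "\<exists>u c v. w = u @ c # v \<and> set v \<subset> set w \<and> set (c # v) = set w"
proof -
  obtain u c v where "rev w = u @ c # v" "set u \<subset> set w" "set (u @ [c]) = set w"
    using split_list_shortest_full_prefix[of "rev w"] assms by auto
  then have "w = rev v @ c # rev u" "set (rev u) \<subset> set w" "set (c # rev u) = set w"
    by (auto simp: rev_swap)
  then show ?thesis
    by blast
qed

lemma word_with_full_content:
  assumes "x \<in> subsemigroup_generated C" and "x \<notin> F"
    and "\<And>D. D \<subset> C \<Longrightarrow> subsemigroup_generated D \<subseteq> F"
  obtains w where "w \<noteq> []" "set w = C" "x = word_prod w"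
proof -
  obtain w where w: "w \<noteq> []" "set w \<subseteq> C" "x = word_prod w"
    using assms(1) by (rule subsemigroup_generatedE)
  have "set w = C"
  proof (rule ccontr)
    assume "set w \<noteq> C"
    then have "x \<in> F"
      using w assms(3)[of "set w"] word_prod_in_subsemigroup_generated[of w "set w"] by blast
    with assms(2) show False ..
  qed
  with w that show thesis
    by blast
qed

section \<open>Completely regular semigroups\<close>

context
  assumes completely_regular: "completely_regular TYPE('a::semigroup_mult)"
begin

lemma completely_regularE:
  fixes x :: 'a
  obtains e g where "e * x = x" "x * e = x" "x * g = e" "g * x = e"
proof -
  obtain H where "x \<in> H" "is_subgroup H"
    using completely_regular unfolding completely_regular_def by blast
  then show thesis
    using that unfolding is_subgroup_def by blast
qed

lemma R_le_refl: "R_le (x :: 'a) x"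
  by (metis R_le_def completely_regularE)

lemma L_le_refl: "L_le (x :: 'a) x"
  by (metis L_le_def completely_regularE)

lemma J_le_refl: "J_le (x :: 'a) x"
  by (metis J_le_def completely_regularE)

lemma J_le_left_factor: "J_le ((x :: 'a) * y) x"
  by (metis J_le_def completely_regularE)

lemma J_le_right_factor: "J_le ((x :: 'a) * y) y"
  by (metis J_le_def completely_regularE)

lemma J_le_swap: "J_le ((x :: 'a) * y) (y * x)"
proof -
  obtain e g where "e * (x * y) = x * y" "g * (x * y) = e"
    by (rule completely_regularE)
  then have "x * y = (g * x) * (y * x) * y"
    by (metis mult.assoc)
  then show ?thesis
    unfolding J_le_def by blast
qed

lemma J_le_left_absorb:
  assumes "J_le (x :: 'a) y"
  shows "J_le x (x * y)"
proof -
  obtain a b where ab: "x = a * y * b"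
    using assms unfolding J_le_def by blast
  obtain e g where "e * x = x" "g * x = e"
    by (rule completely_regularE)
  then have "x = g * ((x * a) * y) * b"
    by (metis ab mult.assoc)
  then have "J_le x ((x * a) * y)"
    unfolding J_le_def by blast
  moreover have "J_le ((x * a) * y) (y * x)"
    using J_le_swap[of "x * a" y] J_le_left_factor[of "y * x" a] J_le_trans
    by (simp add: mult.assoc)
  ultimately show ?thesis
    using J_le_swap[of y x] J_le_trans by blast
qed

lemma J_le_mult:
  assumes "J_le (x :: 'a) y" and "J_le x z"
  shows "J_le x (y * z)"
proof -
  have "J_le (x * y) z"
    using J_le_trans[OF J_le_left_factor assms(2)] .
  then have "J_le (x * y) (x * y * z)"
    by (rule J_le_left_absorb)
  moreover have "J_le (x * y * z) (y * z)"
    using J_le_right_factor[of x "y * z"] by (simp add: mult.assoc)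
  ultimately show ?thesis
    using J_le_left_absorb[OF assms(1)] J_le_trans by blast
qed

lemma R_le_if_J_le:
  assumes "R_le x (p :: 'a)" and "J_le p x"
  shows "R_le p x"
proof -
  obtain v where v: "x = p * v"
    using assms(1) unfolding R_le_def by blast
  then obtain s t where "p = s * p * (v * t)"
    using assms(2) unfolding J_le_def by (metis mult.assoc)
  moreover obtain e g where "v * t * e = v * t" "v * t * g = e"
    by (rule completely_regularE)
  ultimately have "p = p * (v * t * g)"
    by (metis mult.assoc)
  then show ?thesis
    unfolding R_le_def by (metis v mult.assoc)
qed

lemma L_le_if_J_le:
  assumes "L_le x (q :: 'a)" and "J_le q x"
  shows "L_le q x"
proof -
  obtain v where v: "x = v * q"
    using assms(1) unfolding L_le_def by blast
  then obtain s t where "q = (s * v) * q * t"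
    using assms(2) unfolding J_le_def by (metis mult.assoc)
  moreover obtain e g where "e * (s * v) = s * v" "g * (s * v) = e"
    by (rule completely_regularE)
  ultimately have "q = (g * (s * v)) * q"
    by (metis mult.assoc)
  then show ?thesis
    unfolding L_le_def by (metis v mult.assoc)
qed

lemma J_le_word_prod_letter: "a \<in> set w \<Longrightarrow> J_le (word_prod w) (a :: 'a)"
proof (induction w rule: rev_induct)
  case (snoc b w)
  show ?case
  proof (cases "w = []")
    case False
    then show ?thesis
      using snoc J_le_right_factor
      by (auto simp: word_prod_snoc intro: J_le_trans[OF J_le_left_factor])
  qed (use snoc J_le_refl in auto)
qed simp

lemma J_le_word_prod:
  assumes "x \<in> subsemigroup_generated (set w)"
  shows "J_le (word_prod w) (x :: 'a)"
proof -
  have "subsemigroup_generated (set w) \<subseteq> {y. J_le (word_prod w) y}"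
    using J_le_word_prod_letter J_le_mult
    by (intro subsemigroup_generated_least) auto
  with assms show ?thesis
    by blast
qed

lemma R_class_of_shortest_full_prefix:
  assumes "x \<in> subsemigroup_generated C" and "x \<notin> F"
    and F: "\<And>D. D \<subset> C \<Longrightarrow> subsemigroup_generated D \<subseteq> F"
  obtains p where "p \<in> C \<union> (\<lambda>(f, c). f * c) ` (F \<times> C)" and "(x :: 'a) \<in> R_class p"
proof -
  obtain w where w: "w \<noteq> []" "set w = C" "x = word_prod w"
    using word_with_full_content assms by blast
  then obtain u c v where uv: "w = u @ c # v" "set u \<subset> C" "set (u @ [c]) = C"
    using split_list_shortest_full_prefix by blast
  define p where "p = word_prod (u @ [c])"
  have "p \<in> C \<union> (\<lambda>(f, c). f * c) ` (F \<times> C)"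
  proof (cases "u = []")
    case False
    then have "word_prod u \<in> F"
      using F[OF uv(2)] word_prod_in_subsemigroup_generated[of u "set u"] by blast
    then show ?thesis
      using False uv(3) by (auto simp: p_def word_prod_snoc)
  qed (use uv(3) p_def in auto)
  moreover have "R_le x p"
  proof (cases "v = []")
    case True
    then show ?thesis
      using w(3) uv(1) R_le_refl by (simp add: p_def)
  next
    case False
    then have "x = p * word_prod v"
      using w(3) uv(1) word_prod_append[of "u @ [c]" v] by (simp add: p_def)
    then show ?thesis
      unfolding R_le_def by blast
  qed
  moreover have "J_le p x"
    using J_le_word_prod w uv(3) assms(1) by (simp add: p_def)
  ultimately show thesis
    using that R_le_if_J_le by (auto simp: R_class_def)
qed

lemma L_class_of_shortest_full_suffix:
  assumes "x \<in> subsemigroup_generated C" and "x \<notin> F"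
    and F: "\<And>D. D \<subset> C \<Longrightarrow> subsemigroup_generated D \<subseteq> F"
  obtains q where "q \<in> C \<union> (\<lambda>(c, f). c * f) ` (C \<times> F)" and "(x :: 'a) \<in> L_class q"
proof -
  obtain w where w: "w \<noteq> []" "set w = C" "x = word_prod w"
    using word_with_full_content assms by blast
  then obtain u c v where uv: "w = u @ c # v" "set v \<subset> C" "set (c # v) = C"
    using split_list_shortest_full_suffix by blast
  define q where "q = word_prod (c # v)"
  have "q \<in> C \<union> (\<lambda>(c, f). c * f) ` (C \<times> F)"
  proof (cases "v = []")
    case False
    then have "word_prod v \<in> F"
      using F[OF uv(2)] word_prod_in_subsemigroup_generated[of v "set v"] by blast
    then show ?thesis
      using False uv(3) word_prod_append[of "[c]" v] by (auto simp: q_def)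
  qed (use uv(3) q_def in auto)
  moreover have "L_le x q"
  proof (cases "u = []")
    case True
    then show ?thesis
      using w(3) uv(1) L_le_refl by (simp add: q_def)
  next
    case False
    then have "x = word_prod u * q"
      using w(3) uv(1) word_prod_append[of u "c # v"] by (simp add: q_def)
    then show ?thesis
      unfolding L_le_def by blast
  qed
  moreover have "J_le q x"
    using J_le_word_prod w uv(3) assms(1) by (simp add: q_def)
  ultimately show thesis
    using that L_le_if_J_le by (auto simp: L_class_def)
qed

end

lemma finite_subsemigroup_generated:
  fixes C :: "'a::{semigroup_mult,topological_space} set"
  assumes compact: "compact (UNIV :: 'a set)" and Hausdorff: "Hausdorff_space (euclidean :: 'a topology)"
    and continuous_mult: "continuous_on UNIV (\<lambda>x :: 'a \<times> 'a. fst x * snd x)"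
    and countable: "countable (UNIV :: 'a set)"
    and completely_regular: "completely_regular TYPE('a)"
    and "finite C"
  shows "finite (subsemigroup_generated C)"
  using \<open>finite C\<close>
proof (induction C rule: finite_psubset_induct)
  case (psubset C)
  define F where "F = (\<Union>D \<in> {D. D \<subset> C}. subsemigroup_generated D)"
  have F: "subsemigroup_generated D \<subseteq> F" if "D \<subset> C" for D
    using that unfolding F_def by blast
  have "finite {D. D \<subset> C}"
    using psubset.hyps by (auto intro: rev_finite_subset[of "Pow C"])
  then have "finite F"
    unfolding F_def using psubset.IH by blast
  define P where "P = C \<union> (\<lambda>(f, c). f * c) ` (F \<times> C)"
  define Q where "Q = C \<union> (\<lambda>(c, f). c * f) ` (C \<times> F)"
  have "finite P" "finite Q"
    using \<open>finite F\<close> psubset.hyps by (simp_all add: P_def Q_def)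
  have "subsemigroup_generated C \<subseteq> F \<union> (\<Union>p \<in> P. \<Union>q \<in> Q. R_class p \<inter> L_class q)"
  proof
    fix x assume x: "x \<in> subsemigroup_generated C"
    show "x \<in> F \<union> (\<Union>p \<in> P. \<Union>q \<in> Q. R_class p \<inter> L_class q)"
    proof (cases "x \<in> F")
      case False
      obtain p where "p \<in> P" "x \<in> R_class p"
        using R_class_of_shortest_full_prefix[OF completely_regular x False F] unfolding P_def by blast
      moreover obtain q where "q \<in> Q" "x \<in> L_class q"
        using L_class_of_shortest_full_suffix[OF completely_regular x False F] unfolding Q_def by blast
      ultimately show ?thesis
        by blast
    qed blast
  qed
  moreover have "finite (F \<union> (\<Union>p \<in> P. \<Union>q \<in> Q. R_class p \<inter> L_class q))"
    using \<open>finite F\<close> \<open>finite P\<close> \<open>finite Q\<close> finite_H_class[OF compact Hausdorff continuous_mult countable] by blast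
  ultimately show ?case
    by (rule finite_subset)
qed

theorem corollary3p11:
  assumes "profinite_semigroup TYPE('a::{semigroup_mult,topological_space})"
    and "finitely_generated_top TYPE('a)"
    and "countable (UNIV :: 'a set)"
    and "completely_regular TYPE('a)"
  shows "finite (UNIV :: 'a set)"
proof -
  have compact: "compact (UNIV :: 'a set)"
    and Hausdorff: "Hausdorff_space (euclidean :: 'a topology)"
    and continuous_mult: "continuous_on UNIV (\<lambda>x :: 'a \<times> 'a. fst x * snd x)"
    using assms(1) unfolding profinite_semigroup_def Hausdorff_space_def disjnt_def by auto
  obtain A :: "'a set" where A: "finite A" "closure (subsemigroup_generated A) = UNIV"
    using assms(2) unfolding finitely_generated_top_def by blast
  have finite: "finite (subsemigroup_generated A)"
    using finite_subsemigroup_generated[OF compact Hausdorff continuous_mult assms(3,4) A(1)] .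
  then have "closed (subsemigroup_generated A)"
    using closed_if_compact_Hausdorff[OF Hausdorff finite_imp_compact] by blast
  with A(2) finite show ?thesis
    by simp
qed

end
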